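(* Let $R$ be a ring and let $\mathcal{S}$ be a sublattice of the lattice of two-sided ideals of $R$ which is closed under arbitrary intersections and contains $\{0\}$ and $R$. Suppose that for each $I\in\mathcal{S}$ we have $I=\ker(\{\mathfrak{p}\in\mathrm{Spec}_{\mathcal{S}}(R):\mathfrak{p}\supseteq I\})$. For an open set $U$ of $\mathrm{Spec}_{\mathcal{S}}(R)$ (Jacobson topology) put $R[U]=\ker(U^c)$. Then for all open $U,V$ we have $$R[U\cup V]=R[U]+R[V]\quad\text{and}\quad R[U\cap V]=R[U]\cap R[V].$$ Consequently, if $V_1,V_2,U_1,U_2$ are open with $V_1\subseteq U_1$, $V_2\subseteq U_2$ and $U_1\setminus V_1=U_2\setminus V_2$, then there exists an isomorphism from $R[U_1]/R[V_1]$ to $R[U_2]/R[V_2]$, and this isomorphism is natural: if also $V_3\subseteq U_3$ are open with $U_3\setminus V_3=U_1\setminus V_1$, then the composition of the isomorphisms $R[U_1]/R[V_1]\to R[U_2]/R[V_2]$ and $R[U_2]/R[V_2]\to R[U_3]/R[V_3]$ equals the isomorphism $R[U_1]/R[V_1]\to R[U_3]/R[V_3]$.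
   Context: An ideal $P\in\mathcal{S}$ is $\mathcal{S}$-prime if $P\neq R$ and for all $I,J\in\mathcal{S}$, $IJ\subseteq P$ implies $I\subseteq P$ or $J\subseteq P$; $\mathrm{Spec}_{\mathcal{S}}(R)$ is the set of $\mathcal{S}$-prime ideals. For $T\subseteq\mathrm{Spec}_{\mathcal{S}}(R)$, $\ker(T)=\bigcap_{\mathfrak{p}\in T}\mathfrak{p}$ (with $\ker(\emptyset)=R$), and $U^c$ denotes complement in $\mathrm{Spec}_{\mathcal{S}}(R)$. The Jacobson topology is the topology whose closure operation is $\overline{T}=\{\mathfrak{p}\in\mathrm{Spec}_{\mathcal{S}}(R):\mathfrak{p}\supseteq\ker(T)\}$. *)

theory Defs
  imports "HOL-Algebra.Algebra"
begin

text \<open>S-prime ideals: P in S, P proper, and for all I, J in S, IJ \<subseteq> P implies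
  I \<subseteq> P or J \<subseteq> P. The condition IJ \<subseteq> P (IJ the additive subgroup generated by
  all products) is written out as: all products a b with a in I, b in J lie in P.\<close>
definition S_prime :: "('a, 'b) ring_scheme \<Rightarrow> 'a set set \<Rightarrow> 'a set \<Rightarrow> bool" where
  "S_prime R S P \<longleftrightarrow> P \<in> S \<and> P \<noteq> carrier R \<and>
     (\<forall>I\<in>S. \<forall>J\<in>S. (\<forall>a\<in>I. \<forall>b\<in>J. a \<otimes>\<^bsub>R\<^esub> b \<in> P) \<longrightarrow> I \<subseteq> P \<or> J \<subseteq> P)"

definition SpecS :: "('a, 'b) ring_scheme \<Rightarrow> 'a set set \<Rightarrow> 'a set set" where
  "SpecS R S = {P. S_prime R S P}"

text \<open>ker(T) = intersection of T, with ker({}) = R.\<close>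
definition kerS :: "('a, 'b) ring_scheme \<Rightarrow> 'a set set \<Rightarrow> 'a set" where
  "kerS R T = carrier R \<inter> \<Inter>T"

definition jclosure :: "('a, 'b) ring_scheme \<Rightarrow> 'a set set \<Rightarrow> 'a set set \<Rightarrow> 'a set set" where
  "jclosure R S T = {P \<in> SpecS R S. kerS R T \<subseteq> P}"

definition jopen :: "('a, 'b) ring_scheme \<Rightarrow> 'a set set \<Rightarrow> 'a set set \<Rightarrow> bool" where
  "jopen R S U \<longleftrightarrow> U \<subseteq> SpecS R S \<and> jclosure R S (SpecS R S - U) = SpecS R S - U"

definition Rsec :: "('a, 'b) ring_scheme \<Rightarrow> 'a set set \<Rightarrow> 'a set set \<Rightarrow> 'a set" where
  "Rsec R S U = kerS R (SpecS R S - U)"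

definition cosets :: "('a, 'b) ring_scheme \<Rightarrow> 'a set \<Rightarrow> 'a set \<Rightarrow> 'a set set" where
  "cosets R I J = (\<lambda>x. J +>\<^bsub>R\<^esub> x) ` I"

text \<open>Coset multiplication (J + x)(J + y) = J + xy, written choice-free.\<close>
definition coset_mult :: "('a, 'b) ring_scheme \<Rightarrow> 'a set \<Rightarrow> 'a set \<Rightarrow> 'a set \<Rightarrow> 'a set" where
  "coset_mult R J C D = \<Union>{J +>\<^bsub>R\<^esub> (x \<otimes>\<^bsub>R\<^esub> y) | x y. x \<in> C \<and> y \<in> D}"

text \<open>f is an isomorphism (of non-unital rings) from I1/J1 to I2/J2.\<close>
definition quot_iso ::
  "('a, 'b) ring_scheme \<Rightarrow> 'a set \<Rightarrow> 'a set \<Rightarrow> 'a set \<Rightarrow> 'a set \<Rightarrow> ('a set \<Rightarrow> 'a set) \<Rightarrow> bool" where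
  "quot_iso R I1 J1 I2 J2 f \<longleftrightarrow>
     bij_betw f (cosets R I1 J1) (cosets R I2 J2) \<and>
     (\<forall>C\<in>cosets R I1 J1. \<forall>D\<in>cosets R I1 J1.
        f (C <+>\<^bsub>R\<^esub> D) = f C <+>\<^bsub>R\<^esub> f D \<and>
        f (coset_mult R J1 C D) = coset_mult R J2 (f C) (f D))"

text \<open>The canonical map R[U1]/R[V1] \<rightarrow> R[U2]/R[V2]: a coset C is sent to the
  R[V2]-coset of any y \<in> C \<inter> R[U2]. (It depends only on the target pair.)\<close>
definition canon :: "('a, 'b) ring_scheme \<Rightarrow> 'a set set \<Rightarrow> 'a set set \<Rightarrow> 'a set set \<Rightarrow> 'a set \<Rightarrow> 'a set" where
  "canon R S U2 V2 C = \<Union>((\<lambda>y. Rsec R S V2 +>\<^bsub>R\<^esub> y) ` (C \<inter> Rsec R S U2))"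

end

theory Submission
  imports Defs
begin

text \<open>For an open \<open>U\<close> a prime lies
  outside \<open>U\<close> exactly when it contains \<open>R[U]\<close>. Hence a prime containing \<open>R[U] + R[V]\<close> lies
  outside \<open>U \<union> V\<close>, and since every member of \<open>S\<close> is the intersection of the primes above it,
  \<open>R[U \<union> V] \<subseteq> R[U] + R[V]\<close>; the other inclusion and \<open>R[U \<inter> V] = R[U] \<inter> R[V]\<close> are formal.
  Primality makes \<open>U \<inter> V\<close> open, so if \<open>V \<subseteq> U\<close> and \<open>U - V \<subseteq> W\<close> then
  \<open>R[U] = R[V] + R[U \<inter> W]\<close>: every class of \<open>R[U]/R[V]\<close> has a representative in \<open>R[U \<inter> W]\<close>.
  Taking representatives in \<open>R[U\<^sub>1 \<inter> U\<^sub>2]\<close>, the canonical maps between \<open>R[U\<^sub>1]/R[V\<^sub>1]\<close> and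
  \<open>R[U\<^sub>2]/R[V\<^sub>2]\<close> act as \<open>R[V\<^sub>1] + y \<mapsto> R[V\<^sub>2] + y\<close>, so they are mutually inverse ring
  homomorphisms, and naturality follows by choosing representatives in \<open>R[U\<^sub>1 \<inter> U\<^sub>2 \<inter> U\<^sub>3]\<close>.\<close>

lemma (in ring) coset_mult_rcos:
  assumes "ideal J R" "x \<in> carrier R" "y \<in> carrier R"
  shows "coset_mult R J (J +> x) (J +> y) = J +> (x \<otimes> y)"
  using ideal.rcoset_mult_add[OF assms] unfolding coset_mult_def rcoset_mult_def by blast

lemma (in ring) ideal_minus_closed: "ideal I R \<Longrightarrow> a \<in> I \<Longrightarrow> b \<in> I \<Longrightarrow> a \<ominus> b \<in> I"
  by (simp add: a_minus_def additive_subgroup.a_closed additive_subgroup.a_inv_closed ideal.axioms(1))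

locale semiprime_ideal_lattice = ring +
  fixes S :: "'a set set"
  assumes ideal_of_mem: "I \<in> S \<Longrightarrow> ideal I R"
    and set_add_mem: "I \<in> S \<Longrightarrow> J \<in> S \<Longrightarrow> I <+>\<^bsub>R\<^esub> J \<in> S"
    and Inter_mem: "T \<subseteq> S \<Longrightarrow> T \<noteq> {} \<Longrightarrow> \<Inter>T \<in> S"
    and carrier_mem: "carrier R \<in> S"
    and kerS_primes_above: "I \<in> S \<Longrightarrow> I = kerS R {P \<in> SpecS R S. I \<subseteq> P}"
begin

lemma SpecS_mem: "P \<in> SpecS R S \<Longrightarrow> P \<in> S"
  by (simp add: SpecS_def S_prime_def)

lemma Rsec_mem: "Rsec R S U \<in> S"
proof (cases "SpecS R S - U = {}")
  case True
  then show ?thesis unfolding Rsec_def kerS_def True by (simp add: carrier_mem)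
next
  case False
  have "\<Inter>(SpecS R S - U) \<in> S"
    using Inter_mem[OF _ False] SpecS_mem by blast
  moreover have "\<Inter>(SpecS R S - U) \<subseteq> carrier R"
    using ideal.Icarr[OF ideal_of_mem[OF calculation]] by blast
  ultimately show ?thesis by (simp add: Rsec_def kerS_def Int_absorb1)
qed

lemma ideal_Rsec: "ideal (Rsec R S U) R"
  by (rule ideal_of_mem[OF Rsec_mem])

lemma Rsec_carrier: "x \<in> Rsec R S U \<Longrightarrow> x \<in> carrier R"
  by (rule ideal.Icarr[OF ideal_Rsec])

lemma Rsec_mono: "U \<subseteq> V \<Longrightarrow> Rsec R S U \<subseteq> Rsec R S V"
  unfolding Rsec_def kerS_def by blast

lemma Rsec_Int: "Rsec R S (U \<inter> V) = Rsec R S U \<inter> Rsec R S V"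
  unfolding Rsec_def kerS_def by blast

lemma jopen_notin_iff:
  "jopen R S U \<Longrightarrow> P \<in> SpecS R S \<Longrightarrow> P \<notin> U \<longleftrightarrow> Rsec R S U \<subseteq> P"
  unfolding jopen_def jclosure_def Rsec_def by blast

lemma Rsec_Un:
  assumes "jopen R S U" "jopen R S V"
  shows "Rsec R S (U \<union> V) = Rsec R S U <+>\<^bsub>R\<^esub> Rsec R S V"
proof -
  let ?I = "Rsec R S U <+>\<^bsub>R\<^esub> Rsec R S V"
  have I_Idl: "?I = Idl (Rsec R S U \<union> Rsec R S V)"
    by (simp add: union_genideal ideal_Rsec)
  have sub_I: "Rsec R S U \<subseteq> ?I" "Rsec R S V \<subseteq> ?I"
    unfolding I_Idl using genideal_self[of "Rsec R S U \<union> Rsec R S V"] Rsec_carrier by blast+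
  have "Rsec R S (U \<union> V) \<subseteq> kerS R {P \<in> SpecS R S. ?I \<subseteq> P}"
  proof -
    have "Rsec R S (U \<union> V) \<subseteq> P" if "P \<in> SpecS R S" "?I \<subseteq> P" for P
    proof -
      have "P \<notin> U" "P \<notin> V"
        using that sub_I jopen_notin_iff[OF assms(1)] jopen_notin_iff[OF assms(2)] by blast+
      with \<open>P \<in> SpecS R S\<close> show ?thesis by (auto simp: Rsec_def kerS_def)
    qed
    then show ?thesis using Rsec_carrier unfolding kerS_def by blast
  qed
  also have "\<dots> = ?I"
    by (rule kerS_primes_above[symmetric]) (simp add: set_add_mem Rsec_mem)
  finally show ?thesis
    using Rsec_mono[of U "U \<union> V"] Rsec_mono[of V "U \<union> V"]
    by (auto simp: I_Idl intro!: genideal_minimal[OF ideal_Rsec])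
qed

lemma jopen_Int:
  assumes "jopen R S U" "jopen R S V"
  shows "jopen R S (U \<inter> V)"
proof -
  have "Rsec R S (U \<inter> V) \<subseteq> P \<longleftrightarrow> P \<notin> U \<inter> V" if P: "P \<in> SpecS R S" for P
  proof
    assume contains: "Rsec R S (U \<inter> V) \<subseteq> P"
    have "a \<otimes> b \<in> P" if a: "a \<in> Rsec R S U" and b: "b \<in> Rsec R S V" for a b
    proof -
      have "a \<otimes> b \<in> Rsec R S U" using ideal.I_r_closed[OF ideal_Rsec a Rsec_carrier[OF b]] .
      moreover have "a \<otimes> b \<in> Rsec R S V" using ideal.I_l_closed[OF ideal_Rsec b Rsec_carrier[OF a]] .
      ultimately show ?thesis using contains unfolding Rsec_Int by blast
    qed
    then have "Rsec R S U \<subseteq> P \<or> Rsec R S V \<subseteq> P"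
      using P Rsec_mem[of U] Rsec_mem[of V] unfolding SpecS_def S_prime_def by blast
    then show "P \<notin> U \<inter> V"
      using jopen_notin_iff[OF assms(1) P] jopen_notin_iff[OF assms(2) P] by blast
  next
    assume "P \<notin> U \<inter> V"
    then have "Rsec R S U \<subseteq> P \<or> Rsec R S V \<subseteq> P"
      using jopen_notin_iff[OF assms(1) P] jopen_notin_iff[OF assms(2) P] by blast
    then show "Rsec R S (U \<inter> V) \<subseteq> P" unfolding Rsec_Int by blast
  qed
  then have "jclosure R S (SpecS R S - U \<inter> V) = SpecS R S - U \<inter> V"
    unfolding jclosure_def Rsec_def[symmetric] by blast
  with assms show ?thesis unfolding jopen_def by blast
qed

lemma cosets_Rsec_representative:
  assumes "jopen R S U" "jopen R S V" "jopen R S W" "V \<subseteq> U" "U - V \<subseteq> W"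
    and "C \<in> cosets R (Rsec R S U) (Rsec R S V)"
  obtains y where "y \<in> Rsec R S (U \<inter> W)" "C = Rsec R S V +> y"
proof -
  obtain x where x: "x \<in> Rsec R S U" and C: "C = Rsec R S V +> x"
    using assms(6) unfolding cosets_def by blast
  have "U = V \<union> (U \<inter> W)" using assms(4,5) by blast
  then have "Rsec R S U = Rsec R S V <+>\<^bsub>R\<^esub> Rsec R S (U \<inter> W)"
    using Rsec_Un[OF assms(2) jopen_Int[OF assms(1,3)]] by simp
  then obtain a y where a: "a \<in> Rsec R S V" and y: "y \<in> Rsec R S (U \<inter> W)" and "x = a \<oplus> y"
    using x unfolding set_add_def' by blast
  then have "x \<ominus> y = a" using Rsec_carrier by algebra
  then have "C = Rsec R S V +> y"
    using C a quotient_eq_iff_same_a_r_cos[OF ideal_Rsec] Rsec_carrier x y by metis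
  with y show thesis by (rule that)
qed

text \<open>Only \<open>V \<inter> U' \<subseteq> V'\<close> matters here; it follows from \<open>U - V = U' - V'\<close>.\<close>

lemma canon_rcos:
  assumes "V \<inter> U' \<subseteq> V'" "y \<in> Rsec R S U'"
  shows "canon R S U' V' (Rsec R S V +> y) = Rsec R S V' +> y"
proof -
  have yc: "y \<in> carrier R" using Rsec_carrier[OF assms(2)] .
  let ?C = "(Rsec R S V +> y) \<inter> Rsec R S U'"
  have "Rsec R S V' +> z = Rsec R S V' +> y" if z: "z \<in> ?C" for z
  proof -
    obtain h where h: "h \<in> Rsec R S V" and zh: "z = h \<oplus> y"
      using z unfolding a_r_coset_def' by blast
    have zc: "z \<in> carrier R" using z Rsec_carrier by blast
    have "z \<ominus> y = h" using zh Rsec_carrier[OF h] yc by algebra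
    moreover have "z \<ominus> y \<in> Rsec R S U'"
      using z assms(2) by (blast intro: ideal_minus_closed[OF ideal_Rsec])
    ultimately have "z \<ominus> y \<in> Rsec R S (V \<inter> U')"
      using h by (simp add: Rsec_Int)
    then have "z \<ominus> y \<in> Rsec R S V'"
      using Rsec_mono[OF assms(1)] by blast
    then show ?thesis
      using quotient_eq_iff_same_a_r_cos[OF ideal_Rsec zc yc] by blast
  qed
  then have "(\<lambda>z. Rsec R S V' +> z) ` ?C = (\<lambda>z. Rsec R S V' +> y) ` ?C"
    by (rule image_cong[OF refl])
  also have "\<dots> = {Rsec R S V' +> y}"
  proof (rule image_constant)
    have "y \<in> Rsec R S V +> y"
      using additive_subgroup.zero_closed[OF ideal.axioms(1)[OF ideal_Rsec]] yc
      unfolding a_r_coset_def' by force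
    with assms(2) show "y \<in> ?C" by blast
  qed
  finally show ?thesis unfolding canon_def by simp
qed

lemma canon_representative:
  assumes "jopen R S U1" "jopen R S V1" "jopen R S U2" "V1 \<subseteq> U1" "U1 - V1 = U2 - V2"
    and "C \<in> cosets R (Rsec R S U1) (Rsec R S V1)"
  obtains y where "y \<in> Rsec R S U1" "y \<in> Rsec R S U2"
    "C = Rsec R S V1 +> y" "canon R S U2 V2 C = Rsec R S V2 +> y"
proof -
  obtain y where y: "y \<in> Rsec R S (U1 \<inter> U2)" and C: "C = Rsec R S V1 +> y"
    using cosets_Rsec_representative[OF assms(1-4) _ assms(6)] assms(5) by blast
  have "canon R S U2 V2 C = Rsec R S V2 +> y"
    unfolding C using assms(5) y by (intro canon_rcos) (auto simp: Rsec_Int)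
  with y C show thesis unfolding Rsec_Int by (intro that) auto
qed

lemma canon_in_cosets:
  assumes "jopen R S U1" "jopen R S V1" "jopen R S U2" "V1 \<subseteq> U1" "U1 - V1 = U2 - V2"
    and "C \<in> cosets R (Rsec R S U1) (Rsec R S V1)"
  shows "canon R S U2 V2 C \<in> cosets R (Rsec R S U2) (Rsec R S V2)"
  using canon_representative[OF assms] unfolding cosets_def by blast

lemma canon_inverse:
  assumes "jopen R S U1" "jopen R S V1" "jopen R S U2" "V1 \<subseteq> U1" "U1 - V1 = U2 - V2"
    and "C \<in> cosets R (Rsec R S U1) (Rsec R S V1)"
  shows "canon R S U1 V1 (canon R S U2 V2 C) = C"
proof -
  obtain y where y: "y \<in> Rsec R S U1"
    and C: "C = Rsec R S V1 +> y" and fC: "canon R S U2 V2 C = Rsec R S V2 +> y"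
    using canon_representative[OF assms] .
  have "V2 \<inter> U1 \<subseteq> V1" using assms(5) by blast
  then show ?thesis using canon_rcos[OF _ y] C fC by simp
qed

lemma canon_hom:
  assumes "jopen R S U1" "jopen R S V1" "jopen R S U2" "V1 \<subseteq> U1" "U1 - V1 = U2 - V2"
    and "C \<in> cosets R (Rsec R S U1) (Rsec R S V1)" "D \<in> cosets R (Rsec R S U1) (Rsec R S V1)"
  shows "canon R S U2 V2 (C <+>\<^bsub>R\<^esub> D) = canon R S U2 V2 C <+>\<^bsub>R\<^esub> canon R S U2 V2 D"
    and "canon R S U2 V2 (coset_mult R (Rsec R S V1) C D)
           = coset_mult R (Rsec R S V2) (canon R S U2 V2 C) (canon R S U2 V2 D)"
proof -
  obtain x where x: "x \<in> Rsec R S U2" and C: "C = Rsec R S V1 +> x"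
    and fC: "canon R S U2 V2 C = Rsec R S V2 +> x"
    using canon_representative[OF assms(1-6)] by metis
  obtain y where y: "y \<in> Rsec R S U2" and D: "D = Rsec R S V1 +> y"
    and fD: "canon R S U2 V2 D = Rsec R S V2 +> y"
    using canon_representative[OF assms(1-5,7)] by metis
  have xc: "x \<in> carrier R" and yc: "y \<in> carrier R" using x y Rsec_carrier by blast+
  have V12: "V1 \<inter> U2 \<subseteq> V2" using assms(5) by blast
  have "x \<oplus> y \<in> Rsec R S U2"
    using x y additive_subgroup.a_closed[OF ideal.axioms(1)[OF ideal_Rsec]] by blast
  have "canon R S U2 V2 (C <+>\<^bsub>R\<^esub> D) = canon R S U2 V2 (Rsec R S V1 +> (x \<oplus> y))"
    by (simp add: C D ideal.a_rcos_sum[OF ideal_Rsec xc yc])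
  also have "\<dots> = Rsec R S V2 +> (x \<oplus> y)"
    by (rule canon_rcos) fact+
  also have "\<dots> = canon R S U2 V2 C <+>\<^bsub>R\<^esub> canon R S U2 V2 D"
    by (simp add: fC fD ideal.a_rcos_sum[OF ideal_Rsec xc yc])
  finally show "canon R S U2 V2 (C <+>\<^bsub>R\<^esub> D) = canon R S U2 V2 C <+>\<^bsub>R\<^esub> canon R S U2 V2 D" .
  have "x \<otimes> y \<in> Rsec R S U2" using ideal.I_l_closed[OF ideal_Rsec y xc] .
  have "canon R S U2 V2 (coset_mult R (Rsec R S V1) C D) = canon R S U2 V2 (Rsec R S V1 +> (x \<otimes> y))"
    by (simp add: C D coset_mult_rcos[OF ideal_Rsec xc yc])
  also have "\<dots> = Rsec R S V2 +> (x \<otimes> y)"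
    by (rule canon_rcos) fact+
  also have "\<dots> = coset_mult R (Rsec R S V2) (canon R S U2 V2 C) (canon R S U2 V2 D)"
    by (simp add: fC fD coset_mult_rcos[OF ideal_Rsec xc yc])
  finally show "canon R S U2 V2 (coset_mult R (Rsec R S V1) C D)
           = coset_mult R (Rsec R S V2) (canon R S U2 V2 C) (canon R S U2 V2 D)" .
qed

lemma quot_iso_canon:
  assumes "jopen R S U1" "jopen R S V1" "jopen R S U2" "jopen R S V2"
    and "V1 \<subseteq> U1" "V2 \<subseteq> U2" "U1 - V1 = U2 - V2"
  shows "quot_iso R (Rsec R S U1) (Rsec R S V1) (Rsec R S U2) (Rsec R S V2) (canon R S U2 V2)"
proof -
  note hyps12 = assms(1-3,5,7) and hyps21 = assms(3,4,1,6) assms(7)[symmetric]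
  have "bij_betw (canon R S U2 V2)
          (cosets R (Rsec R S U1) (Rsec R S V1)) (cosets R (Rsec R S U2) (Rsec R S V2))"
    by (rule bij_betw_byWitness[where f' = "canon R S U1 V1"])
      (simp_all add: canon_inverse[OF hyps12] canon_inverse[OF hyps21]
        image_subset_iff canon_in_cosets[OF hyps12] canon_in_cosets[OF hyps21])
  then show ?thesis
    unfolding quot_iso_def by (simp add: canon_hom[OF hyps12])
qed

lemma canon_trans:
  assumes "jopen R S U1" "jopen R S V1" "jopen R S U2" "jopen R S U3"
    and "V1 \<subseteq> U1" "U1 - V1 = U2 - V2" "U3 - V3 = U1 - V1"
    and "C \<in> cosets R (Rsec R S U1) (Rsec R S V1)"
  shows "canon R S U3 V3 (canon R S U2 V2 C) = canon R S U3 V3 C"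
proof -
  have "U1 - V1 \<subseteq> U2 \<inter> U3" using assms(6,7) by blast
  then obtain y where y: "y \<in> Rsec R S (U1 \<inter> (U2 \<inter> U3))" and C: "C = Rsec R S V1 +> y"
    by (rule cosets_Rsec_representative[OF assms(1,2) jopen_Int[OF assms(3,4)] assms(5) _ assms(8)])
  then have y2: "y \<in> Rsec R S U2" and y3: "y \<in> Rsec R S U3" unfolding Rsec_Int by blast+
  have "canon R S U2 V2 C = Rsec R S V2 +> y"
    unfolding C using _ y2 by (rule canon_rcos) (use assms(6) in blast)
  moreover have "canon R S U3 V3 (Rsec R S V2 +> y) = Rsec R S V3 +> y"
    using _ y3 by (rule canon_rcos) (use assms(6,7) in blast)
  moreover have "canon R S U3 V3 C = Rsec R S V3 +> y"
    unfolding C using _ y3 by (rule canon_rcos) (use assms(7) in blast)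
  ultimately show ?thesis by simp
qed

end

theorem lemma3p5:
  fixes R :: "('a, 'b) ring_scheme" and S :: "'a set set"
  assumes "ring R"
    and "\<forall>I\<in>S. ideal I R"
    and "\<forall>I\<in>S. \<forall>J\<in>S. I <+>\<^bsub>R\<^esub> J \<in> S"
    and "\<forall>I\<in>S. \<forall>J\<in>S. I \<inter> J \<in> S"
    and "\<forall>T. T \<subseteq> S \<and> T \<noteq> {} \<longrightarrow> \<Inter>T \<in> S"
    and "{\<zero>\<^bsub>R\<^esub>} \<in> S"
    and "carrier R \<in> S"
    and "\<forall>I\<in>S. I = kerS R {P \<in> SpecS R S. I \<subseteq> P}"
  shows "(\<forall>U V. jopen R S U \<and> jopen R S V \<longrightarrow>
            Rsec R S (U \<union> V) = Rsec R S U <+>\<^bsub>R\<^esub> Rsec R S V \<and>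
            Rsec R S (U \<inter> V) = Rsec R S U \<inter> Rsec R S V)
       \<and> (\<forall>U1 V1 U2 V2. jopen R S U1 \<and> jopen R S V1 \<and> jopen R S U2 \<and> jopen R S V2 \<and>
            V1 \<subseteq> U1 \<and> V2 \<subseteq> U2 \<and> U1 - V1 = U2 - V2 \<longrightarrow>
            quot_iso R (Rsec R S U1) (Rsec R S V1) (Rsec R S U2) (Rsec R S V2) (canon R S U2 V2))
       \<and> (\<forall>U1 V1 U2 V2 U3 V3. jopen R S U1 \<and> jopen R S V1 \<and> jopen R S U2 \<and> jopen R S V2 \<and>
            jopen R S U3 \<and> jopen R S V3 \<and>
            V1 \<subseteq> U1 \<and> V2 \<subseteq> U2 \<and> V3 \<subseteq> U3 \<and> U1 - V1 = U2 - V2 \<and> U3 - V3 = U1 - V1 \<longrightarrow>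
            (\<forall>C\<in>cosets R (Rsec R S U1) (Rsec R S V1).
               canon R S U3 V3 (canon R S U2 V2 C) = canon R S U3 V3 C))"
proof -
  interpret semiprime_ideal_lattice R S
    by (intro semiprime_ideal_lattice.intro semiprime_ideal_lattice_axioms.intro assms(1))
      (simp_all add: assms(2,3,5,7) assms(8)[rule_format, symmetric])
  show ?thesis
    using Rsec_Un Rsec_Int quot_iso_canon canon_trans by meson
qed

end
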